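(* Fix an integer $J\ge 1$, a non-decreasing function $\alpha:[0,1]\to(0,\infty)$, and real numbers (edge latencies) $\ell_1\le \ell_2\le\cdots\le \ell_J$, where the edges $j\in\{1,\dots,J\}$ are indexed in order of non-decreasing latency. Let $x_1,\dots,x_J\ge 0$ with $\sum_{j=1}^J x_j=1$ be a desired flow, and set $a_0=0$ and $a_j=\sum_{k=1}^{j}x_k$ for $j=1,\dots,J$ (so $a_J=1$). Consider the assignment $x:[0,1]\to\{1,\dots,J\}$ that routes the users $a\in[a_{j-1},a_j)$ (for $j<J$) and $a\in[a_{J-1},1]$ (for $j=J$) to edge $j$, so that edge $j$ carries flow $x_j$. Let $\tau_J\in\mathbb{R}$ be arbitrary and define, for every $j\in\{1,\dots,J\}$, $$\tau_j=\tau_J+\sum_{k=j}^{J-1}\frac{\ell_{k+1}-\ell_k}{\alpha(a_k)}.$$ Then $x$ is a Nash (equilibrium) flow for the instance $(\alpha,\ell,\tau)$: for every user $a\in[0,1]$ and every edge $j'\in\{1,\dots,J\}$, $$\ell_{x(a)}+\alpha(a)\,\tau_{x(a)}\;\le\;\ell_{j'}+\alpha(a)\,\tau_{j'}.$$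
   Context: Setting: a single source–sink pair connected by $J$ parallel edges (delivery modes). The population of users is the interval $[0,1]$ (nonatomic; each $a\in[0,1]$ is an infinitesimal user), and $\alpha(a)$ is user $a$'s trade-off between price and time. Edge $j$ has latency $\ell_j$ (the latency evaluated at the given flow; prices do not affect latencies) and price $\tau_j$. User $a$ evaluates edge $j$ by the cost $\ell_j+\alpha(a)\tau_j$. A flow $x:[0,1]\to\{1,\dots,J\}$ (Lebesgue measurable) is a Nash flow for $(\alpha,\ell,\tau)$ if every user is assigned to an edge minimizing its cost, i.e. $\ell_{x(a)}+\alpha(a)\tau_{x(a)}\le \ell_{j}+\alpha(a)\tau_{j}$ for all $a\in[0,1]$ and all edges $j$. *)

theory Defs
  imports "HOL-Analysis.Analysis"
begin

definition cum :: "(nat \<Rightarrow> real) \<Rightarrow> nat \<Rightarrow> real" where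
  "cum x j = (\<Sum>k=1..j. x k)"

definition route :: "nat \<Rightarrow> (nat \<Rightarrow> real) \<Rightarrow> real \<Rightarrow> nat" where
  "route J x a =
     (if \<exists>j\<in>{1..<J}. cum x (j - 1) \<le> a \<and> a < cum x j
      then (THE j. j \<in> {1..<J} \<and> cum x (j - 1) \<le> a \<and> a < cum x j)
      else J)"

definition price :: "nat \<Rightarrow> (real \<Rightarrow> real) \<Rightarrow> (nat \<Rightarrow> real) \<Rightarrow> (nat \<Rightarrow> real) \<Rightarrow> real \<Rightarrow> nat \<Rightarrow> real" where
  "price J \<alpha> l x tauJ j = tauJ + (\<Sum>k=j..J-1. (l (Suc k) - l k) / \<alpha> (cum x k))"

definition is_nash_flow ::
  "nat \<Rightarrow> (real \<Rightarrow> real) \<Rightarrow> (nat \<Rightarrow> real) \<Rightarrow> (nat \<Rightarrow> real) \<Rightarrow> (real \<Rightarrow> nat) \<Rightarrow> bool" where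
  "is_nash_flow J \<alpha> l \<tau> f \<longleftrightarrow>
     (\<forall>a\<in>{0..1}. f a \<in> {1..J} \<and>
        (\<forall>j'\<in>{1..J}. l (f a) + \<alpha> a * \<tau> (f a) \<le> l j' + \<alpha> a * \<tau> j'))"

end

theory Submission
  imports Defs
begin

text \<open>For edges \<open>j \<le> i\<close> the price difference \<open>\<tau>\<^sub>j - \<tau>\<^sub>i\<close> is the sum of the latency
  increments \<open>\<ell>\<^sub>k\<^sub>+\<^sub>1 - \<ell>\<^sub>k\<close> (\<open>j \<le> k < i\<close>), each divided by \<open>\<alpha>(a\<^sub>k)\<close>. A user \<open>a\<close> routed to
  edge \<open>i\<close> satisfies \<open>a\<^sub>i\<^sub>-\<^sub>1 \<le> a < a\<^sub>i\<close>, so by monotonicity of \<open>\<alpha>\<close> the factor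
  \<open>\<alpha>(a) / \<alpha>(a\<^sub>k)\<close> is at most 1 for the increments \<open>k \<ge> i\<close> leading to slower edges and at
  least 1 for the increments \<open>k < i\<close> leading to faster ones. Either way, the change of
  \<open>\<alpha>(a)\<close> times the price never outweighs the opposite change of latency.\<close>

lemma sum_weighted_increments_le:
  fixes l w :: "nat \<Rightarrow> real"
  assumes "i \<le> j" and "\<forall>k\<in>{i..<j}. 0 < w k \<and> c \<le> w k \<and> l k \<le> l (Suc k)"
  shows "c * (\<Sum>k=i..<j. (l (Suc k) - l k) / w k) \<le> l j - l i"
proof -
  have "c * (\<Sum>k=i..<j. (l (Suc k) - l k) / w k) = (\<Sum>k=i..<j. c * (l (Suc k) - l k) / w k)"
    by (simp add: sum_distrib_left)
  also have "\<dots> \<le> (\<Sum>k=i..<j. l (Suc k) - l k)"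
  proof (rule sum_mono)
    fix k assume "k \<in> {i..<j}"
    then have "0 < w k" "c \<le> w k" "l k \<le> l (Suc k)" using assms(2) by auto
    then show "c * (l (Suc k) - l k) / w k \<le> l (Suc k) - l k"
      by (simp add: pos_divide_le_eq mult_right_mono mult.commute)
  qed
  also have "\<dots> = l j - l i" using sum_Suc_diff'[OF assms(1)] .
  finally show ?thesis .
qed

lemma sum_weighted_increments_ge:
  fixes l w :: "nat \<Rightarrow> real"
  assumes "i \<le> j" and "\<forall>k\<in>{i..<j}. 0 < w k \<and> w k \<le> c \<and> l k \<le> l (Suc k)"
  shows "l j - l i \<le> c * (\<Sum>k=i..<j. (l (Suc k) - l k) / w k)"
proof -
  have "l j - l i = (\<Sum>k=i..<j. l (Suc k) - l k)" using sum_Suc_diff'[OF assms(1)] ..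
  also have "\<dots> \<le> (\<Sum>k=i..<j. c * (l (Suc k) - l k) / w k)"
  proof (rule sum_mono)
    fix k assume "k \<in> {i..<j}"
    then have "0 < w k" "w k \<le> c" "l k \<le> l (Suc k)" using assms(2) by auto
    then show "l (Suc k) - l k \<le> c * (l (Suc k) - l k) / w k"
      by (simp add: pos_le_divide_eq mult_right_mono mult.commute)
  qed
  also have "\<dots> = c * (\<Sum>k=i..<j. (l (Suc k) - l k) / w k)"
    by (simp add: sum_distrib_left)
  finally show ?thesis .
qed

lemma cum_mono:
  assumes "\<forall>j\<in>{1..m}. x j \<ge> 0" and "k \<le> m"
  shows "cum x k \<le> cum x m"
  unfolding cum_def using assms by (intro sum_mono2) auto

lemma le_if_no_interval_contains:
  fixes c :: "nat \<Rightarrow> real"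
  assumes "c 0 \<le> a" and "\<not> (\<exists>j\<in>{1..<J}. c (j - 1) \<le> a \<and> a < c j)"
  shows "c (J - 1) \<le> a"
proof -
  have "c m \<le> a" if "m \<le> J - 1" for m
    using that
  proof (induction m)
    case 0
    show ?case using assms(1) .
  next
    case (Suc m)
    then have "Suc m \<in> {1..<J}" by auto
    with Suc assms(2) show ?case by force
  qed
  then show ?thesis by simp
qed

locale parallel_links =
  fixes J :: nat and \<alpha> :: "real \<Rightarrow> real" and l :: "nat \<Rightarrow> real" and x :: "nat \<Rightarrow> real"
  assumes J_pos: "J \<ge> 1"
    and \<alpha>_mono: "mono_on {0..1} \<alpha>"
    and \<alpha>_pos: "\<forall>a\<in>{0..1}. \<alpha> a > 0"
    and l_mono: "\<forall>j\<in>{1..J}. \<forall>k\<in>{1..J}. j \<le> k \<longrightarrow> l j \<le> l k"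
    and x_nonneg: "\<forall>j\<in>{1..J}. x j \<ge> 0"
    and x_sum: "(\<Sum>j=1..J. x j) = 1"
begin

lemma cum_mono_upto_J: "k \<le> m \<Longrightarrow> m \<le> J \<Longrightarrow> cum x k \<le> cum x m"
  using x_nonneg by (intro cum_mono) auto

lemma cum_in_unit_interval:
  assumes "k \<le> J"
  shows "cum x k \<in> {0..1}"
proof -
  have "cum x 0 \<le> cum x k" "cum x k \<le> cum x J"
    using assms cum_mono_upto_J by auto
  moreover have "cum x 0 = 0" "cum x J = 1"
    using x_sum by (simp_all add: cum_def)
  ultimately show ?thesis by simp
qed

lemma \<alpha>_le_\<alpha>_cum:
  assumes "a \<in> {0..1}" "k \<le> J" "a \<le> cum x k"
  shows "\<alpha> a \<le> \<alpha> (cum x k)"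
  using assms cum_in_unit_interval by (auto intro: mono_onD[OF \<alpha>_mono])

lemma \<alpha>_cum_le_\<alpha>:
  assumes "a \<in> {0..1}" "k \<le> J" "cum x k \<le> a"
  shows "\<alpha> (cum x k) \<le> \<alpha> a"
  using assms cum_in_unit_interval by (auto intro: mono_onD[OF \<alpha>_mono])

lemma \<alpha>_cum_pos: "k \<le> J \<Longrightarrow> 0 < \<alpha> (cum x k)"
  using \<alpha>_pos cum_in_unit_interval by blast

lemma l_step_mono: "1 \<le> k \<Longrightarrow> k < J \<Longrightarrow> l k \<le> l (Suc k)"
  using l_mono by auto

lemma price_split:
  assumes "j \<le> i" "i \<le> J"
  shows "price J \<alpha> l x t j = price J \<alpha> l x t i + (\<Sum>k=j..<i. (l (Suc k) - l k) / \<alpha> (cum x k))"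
proof -
  have "{j..J - 1} = {j..<J}" for j using J_pos by auto
  then have "price J \<alpha> l x t j = t + (\<Sum>k=j..<J. (l (Suc k) - l k) / \<alpha> (cum x k))" for j
    unfolding price_def by simp
  then show ?thesis
    by (simp add: sum.atLeastLessThan_concat[OF assms, symmetric])
qed

lemma route_eq_interval:
  assumes j: "j \<in> {1..<J}" "cum x (j - 1) \<le> a" "a < cum x j"
  shows "route J x a = j"
proof -
  have unique: "j' = j" if j': "j' \<in> {1..<J}" "cum x (j' - 1) \<le> a" "a < cum x j'" for j'
  proof (rule ccontr)
    assume "j' \<noteq> j"
    then consider "j' \<le> j - 1" | "j \<le> j' - 1" by linarith
    then show False
    proof cases
      case 1
      with j(1) have "cum x j' \<le> cum x (j - 1)" by (intro cum_mono_upto_J) auto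
      with j j' show False by linarith
    next
      case 2
      with j'(1) have "cum x j \<le> cum x (j' - 1)" by (intro cum_mono_upto_J) auto
      with j j' show False by linarith
    qed
  qed
  have "route J x a = (THE j. j \<in> {1..<J} \<and> cum x (j - 1) \<le> a \<and> a < cum x j)"
    unfolding route_def using j by (intro if_P) blast
  also have "\<dots> = j"
    using j unique by (intro the_equality) blast+
  finally show ?thesis .
qed

lemma route_bounds:
  assumes "0 \<le> a"
  shows "route J x a \<in> {1..J}" "cum x (route J x a - 1) \<le> a"
    "route J x a < J \<Longrightarrow> a < cum x (route J x a)"
proof -
  have "route J x a \<in> {1..J} \<and> cum x (route J x a - 1) \<le> a
    \<and> (route J x a < J \<longrightarrow> a < cum x (route J x a))"
  proof (cases "\<exists>j\<in>{1..<J}. cum x (j - 1) \<le> a \<and> a < cum x j")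
    case True
    then obtain j where j: "j \<in> {1..<J}" "cum x (j - 1) \<le> a" "a < cum x j" by blast
    with route_eq_interval[OF j] show ?thesis by simp
  next
    case False
    have "cum x (J - 1) \<le> a"
      using le_if_no_interval_contains[OF _ False] assms by (simp add: cum_def)
    moreover have "route J x a = J"
      unfolding route_def using False by (intro if_not_P)
    ultimately show ?thesis using J_pos by simp
  qed
  then show "route J x a \<in> {1..J}" "cum x (route J x a - 1) \<le> a"
    "route J x a < J \<Longrightarrow> a < cum x (route J x a)" by simp_all
qed

lemma no_deviation_to_slower_edge:
  assumes "a \<in> {0..1}" "i \<in> {1..J}" "i < J \<Longrightarrow> a < cum x i" "j \<in> {1..J}" "i \<le> j"
  shows "l i + \<alpha> a * price J \<alpha> l x t i \<le> l j + \<alpha> a * price J \<alpha> l x t j"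
proof -
  have "\<forall>k\<in>{i..<j}. 0 < \<alpha> (cum x k) \<and> \<alpha> a \<le> \<alpha> (cum x k) \<and> l k \<le> l (Suc k)"
  proof
    fix k assume k: "k \<in> {i..<j}"
    then have "a < cum x i" "cum x i \<le> cum x k" using assms cum_mono_upto_J by auto
    with k assms show "0 < \<alpha> (cum x k) \<and> \<alpha> a \<le> \<alpha> (cum x k) \<and> l k \<le> l (Suc k)"
      using \<alpha>_cum_pos \<alpha>_le_\<alpha>_cum l_step_mono by auto
  qed
  from sum_weighted_increments_le[OF assms(5) this] show ?thesis
    using price_split[OF assms(5)] assms(4) by (simp add: algebra_simps)
qed

lemma no_deviation_to_faster_edge:
  assumes "a \<in> {0..1}" "i \<in> {1..J}" "cum x (i - 1) \<le> a" "j \<in> {1..J}" "j \<le> i"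
  shows "l i + \<alpha> a * price J \<alpha> l x t i \<le> l j + \<alpha> a * price J \<alpha> l x t j"
proof -
  have "\<forall>k\<in>{j..<i}. 0 < \<alpha> (cum x k) \<and> \<alpha> (cum x k) \<le> \<alpha> a \<and> l k \<le> l (Suc k)"
  proof
    fix k assume k: "k \<in> {j..<i}"
    then have "cum x k \<le> cum x (i - 1)" using assms cum_mono_upto_J by auto
    with k assms show "0 < \<alpha> (cum x k) \<and> \<alpha> (cum x k) \<le> \<alpha> a \<and> l k \<le> l (Suc k)"
      using \<alpha>_cum_pos \<alpha>_cum_le_\<alpha> l_step_mono by auto
  qed
  from sum_weighted_increments_ge[OF assms(5) this] show ?thesis
    using price_split[OF assms(5)] assms(2) by (simp add: algebra_simps)
qed

lemma nash_flow: "is_nash_flow J \<alpha> l (price J \<alpha> l x t) (route J x)"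
  unfolding is_nash_flow_def
proof (intro ballI conjI)
  fix a :: real assume a: "a \<in> {0..1}"
  then have "0 \<le> a" by simp
  note i = route_bounds[OF this]
  show "route J x a \<in> {1..J}" by (fact i(1))
  show "l (route J x a) + \<alpha> a * price J \<alpha> l x t (route J x a) \<le> l j + \<alpha> a * price J \<alpha> l x t j"
    if j: "j \<in> {1..J}" for j
  proof (cases "route J x a \<le> j")
    case True
    from no_deviation_to_slower_edge[OF a i(1,3) j True] show ?thesis .
  next
    case False
    then have "j \<le> route J x a" by simp
    from no_deviation_to_faster_edge[OF a i(1,2) j this] show ?thesis .
  qed
qed

end

theorem theorem1:
  fixes J :: nat and \<alpha> :: "real \<Rightarrow> real" and l :: "nat \<Rightarrow> real"
    and x :: "nat \<Rightarrow> real" and tauJ :: real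
  assumes "J \<ge> 1"
    and "mono_on {0..1} \<alpha>"
    and "\<forall>a\<in>{0..1}. \<alpha> a > 0"
    and "\<forall>j\<in>{1..J}. \<forall>k\<in>{1..J}. j \<le> k \<longrightarrow> l j \<le> l k"
    and "\<forall>j\<in>{1..J}. x j \<ge> 0"
    and "(\<Sum>j=1..J. x j) = 1"
  shows "is_nash_flow J \<alpha> l (price J \<alpha> l x tauJ) (route J x)"
proof -
  interpret parallel_links J \<alpha> l x
    using assms by unfold_locales
  show ?thesis by (rule nash_flow)
qed

end
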